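(* The quotient $\mathbb F$-vector space $\Re/I_\nu(a,b,c)$ is spanned by the cosets $A^i+I_\nu(a,b,c)$, $i\in\mathbb N$.
   Context: $\mathbb F$ is algebraically closed with $\operatorname{char}\mathbb F\ne2$. The Racah algebra $\Re$ is the unital associative $\mathbb F$-algebra with generators $A,B,C,D$ and relations $[A,B]=[B,C]=[C,A]=2D$ together with the requirement that each of $\alpha:=[A,D]+AC-BA$, $\beta:=[B,D]+BA-CB$, $\gamma:=[C,D]+CB-AC$ is central in $\Re$; $\delta:=A+B+C$. For $a,b,c,\nu\in\mathbb F$ and $i\in\mathbb Z$: $\theta_i=(a+\tfrac\nu2-i)(a+\tfrac\nu2-i+1)$, $\theta_i^*=(b+\tfrac\nu2-i)(b+\tfrac\nu2-i+1)$, $\varphi_i=i(i-\nu-1)(a+b+c+\tfrac\nu2-i+2)(a+b-c+\tfrac\nu2-i+1)$, $\zeta=(c-b)(c+b+1)(a-\tfrac\nu2)(a+\tfrac\nu2+1)$, $\zeta^*=(a-c)(a+c+1)(b-\tfrac\nu2)(b+\tfrac\nu2+1)$, $\eta=\tfrac\nu2(\tfrac\nu2+1)+a(a+1)+b(b+1)+c(c+1)$. $I_\nu(a,b,c)$ is the left ideal of $\Re$ generated by $B-\theta_0^*$, $(B-\theta_1^* )(A-\theta_0)-\varphi_1$, $\alpha-\zeta$, $\beta-\zeta^*$, $\delta-\eta$. *)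

theory Defs
  imports "HOL-Computational_Algebra.Polynomial"
begin

text \<open>The free unital associative algebra over a field on generators A,B,C,D,
  realised as finitely supported functions from words to scalars.\<close>

datatype gen = GA | GB | GC | GD

type_synonym 'a fa = "gen list \<Rightarrow> 'a"

definition fa_valid :: "'a::field fa \<Rightarrow> bool" where
  "fa_valid p \<longleftrightarrow> finite {w. p w \<noteq> 0}"

definition fa_zero :: "'a::field fa" where "fa_zero = (\<lambda>w. 0)"
definition fa_add :: "'a::field fa \<Rightarrow> 'a fa \<Rightarrow> 'a fa" where
  "fa_add p q = (\<lambda>w. p w + q w)"
definition fa_sub :: "'a::field fa \<Rightarrow> 'a fa \<Rightarrow> 'a fa" where
  "fa_sub p q = (\<lambda>w. p w - q w)"
definition fa_smult :: "'a::field \<Rightarrow> 'a fa \<Rightarrow> 'a fa" where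
  "fa_smult c p = (\<lambda>w. c * p w)"
definition fa_const :: "'a::field \<Rightarrow> 'a fa" where
  "fa_const c = (\<lambda>w. if w = [] then c else 0)"
definition fa_gen :: "gen \<Rightarrow> 'a::field fa" where
  "fa_gen g = (\<lambda>w. if w = [g] then 1 else 0)"
definition fa_mul :: "'a::field fa \<Rightarrow> 'a fa \<Rightarrow> 'a fa" where
  "fa_mul p q = (\<lambda>w. \<Sum>k\<le>length w. p (take k w) * q (drop k w))"

primrec fa_pow :: "'a::field fa \<Rightarrow> nat \<Rightarrow> 'a fa" where
  "fa_pow p 0 = fa_const 1"
| "fa_pow p (Suc n) = fa_mul p (fa_pow p n)"

definition fa_comm :: "'a::field fa \<Rightarrow> 'a fa \<Rightarrow> 'a fa" where
  "fa_comm p q = fa_sub (fa_mul p q) (fa_mul q p)"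

inductive_set two_ideal :: "'a::field fa set \<Rightarrow> 'a fa set" for S where
  ti_zero: "fa_zero \<in> two_ideal S"
| ti_gen: "s \<in> S \<Longrightarrow> s \<in> two_ideal S"
| ti_add: "x \<in> two_ideal S \<Longrightarrow> y \<in> two_ideal S \<Longrightarrow> fa_add x y \<in> two_ideal S"
| ti_lmul: "x \<in> two_ideal S \<Longrightarrow> fa_valid u \<Longrightarrow> fa_mul u x \<in> two_ideal S"
| ti_rmul: "x \<in> two_ideal S \<Longrightarrow> fa_valid u \<Longrightarrow> fa_mul x u \<in> two_ideal S"

inductive_set left_ideal :: "'a::field fa set \<Rightarrow> 'a fa set" for S where
  li_zero: "fa_zero \<in> left_ideal S"
| li_gen: "s \<in> S \<Longrightarrow> s \<in> left_ideal S"
| li_add: "x \<in> left_ideal S \<Longrightarrow> y \<in> left_ideal S \<Longrightarrow> fa_add x y \<in> left_ideal S"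
| li_lmul: "x \<in> left_ideal S \<Longrightarrow> fa_valid u \<Longrightarrow> fa_mul u x \<in> left_ideal S"

abbreviation "fA \<equiv> fa_gen GA"
abbreviation "fB \<equiv> fa_gen GB"
abbreviation "fC \<equiv> fa_gen GC"
abbreviation "fD \<equiv> fa_gen GD"

definition r_alpha :: "'a::field fa" where
  "r_alpha = fa_add (fa_comm fA fD) (fa_sub (fa_mul fA fC) (fa_mul fB fA))"
definition r_beta :: "'a::field fa" where
  "r_beta = fa_add (fa_comm fB fD) (fa_sub (fa_mul fB fA) (fa_mul fC fB))"
definition r_gamma :: "'a::field fa" where
  "r_gamma = fa_add (fa_comm fC fD) (fa_sub (fa_mul fC fB) (fa_mul fA fC))"
definition r_delta :: "'a::field fa" where
  "r_delta = fa_add fA (fa_add fB fC)"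

definition racah_rels :: "'a::field fa set" where
  "racah_rels =
     {fa_sub (fa_comm fA fB) (fa_smult 2 fD),
      fa_sub (fa_comm fB fC) (fa_smult 2 fD),
      fa_sub (fa_comm fC fA) (fa_smult 2 fD)}
   \<union> {fa_comm r (fa_gen g) | r g. r \<in> {r_alpha, r_beta, r_gamma}}"

text \<open>Kernel of the quotient map Free -> Re.\<close>
definition racah_ideal :: "'a::field fa set" where
  "racah_ideal = two_ideal racah_rels"

definition theta :: "'a::field \<Rightarrow> 'a \<Rightarrow> int \<Rightarrow> 'a" where
  "theta a \<nu> i = (a + \<nu>/2 - of_int i) * (a + \<nu>/2 - of_int i + 1)"
definition thetas :: "'a::field \<Rightarrow> 'a \<Rightarrow> int \<Rightarrow> 'a" where
  "thetas b \<nu> i = (b + \<nu>/2 - of_int i) * (b + \<nu>/2 - of_int i + 1)"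
definition phi :: "'a::field \<Rightarrow> 'a \<Rightarrow> 'a \<Rightarrow> 'a \<Rightarrow> int \<Rightarrow> 'a" where
  "phi a b c \<nu> i = of_int i * (of_int i - \<nu> - 1) * (a + b + c + \<nu>/2 - of_int i + 2)
                   * (a + b - c + \<nu>/2 - of_int i + 1)"
definition zeta :: "'a::field \<Rightarrow> 'a \<Rightarrow> 'a \<Rightarrow> 'a \<Rightarrow> 'a" where
  "zeta a b c \<nu> = (c - b) * (c + b + 1) * (a - \<nu>/2) * (a + \<nu>/2 + 1)"
definition zetas :: "'a::field \<Rightarrow> 'a \<Rightarrow> 'a \<Rightarrow> 'a \<Rightarrow> 'a" where
  "zetas a b c \<nu> = (a - c) * (a + c + 1) * (b - \<nu>/2) * (b + \<nu>/2 + 1)"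
definition eta :: "'a::field \<Rightarrow> 'a \<Rightarrow> 'a \<Rightarrow> 'a \<Rightarrow> 'a" where
  "eta a b c \<nu> = \<nu>/2 * (\<nu>/2 + 1) + a * (a + 1) + b * (b + 1) + c * (c + 1)"

text \<open>Lifts to the free algebra of the generators of the left ideal I_nu(a,b,c).\<close>
definition I_gens :: "'a::field \<Rightarrow> 'a \<Rightarrow> 'a \<Rightarrow> 'a \<Rightarrow> 'a fa set" where
  "I_gens a b c \<nu> =
     {fa_sub fB (fa_const (thetas b \<nu> 0)),
      fa_sub (fa_mul (fa_sub fB (fa_const (thetas b \<nu> 1))) (fa_sub fA (fa_const (theta a \<nu> 0))))
             (fa_const (phi a b c \<nu> 1)),
      fa_sub r_alpha (fa_const (zeta a b c \<nu>)),
      fa_sub r_beta (fa_const (zetas a b c \<nu>)),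
      fa_sub r_delta (fa_const (eta a b c \<nu>))}"

text \<open>Preimage in the free algebra of I_nu(a,b,c) under Free -> Re:
  the sum of the Racah ideal and the left ideal generated by the lifts.\<close>
definition I_pre :: "'a::field \<Rightarrow> 'a \<Rightarrow> 'a \<Rightarrow> 'a \<Rightarrow> 'a fa set" where
  "I_pre a b c \<nu> = {fa_add j l | j l. j \<in> racah_ideal \<and> l \<in> left_ideal (I_gens a b c \<nu>)}"

end

theory Submission
  imports Defs
begin

text \<open>Modulo \<open>I\<close>, the generators \<open>B - \<theta>\<^sup>*\<^sub>0\<close> and \<open>(B - \<theta>\<^sup>*\<^sub>1)(A - \<theta>\<^sub>0) - \<phi>\<^sub>1\<close> turn \<open>B\<close> and
  \<open>B A\<close> into polynomials in \<open>A\<close>, and the central elements \<open>\<alpha>\<close>, \<open>\<delta>\<close> act on every \<open>A\<^sup>n\<close> as the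
  scalars \<open>\<zeta>\<close>, \<open>\<eta>\<close>. Eliminating \<open>C = \<delta> - A - B\<close> and \<open>2D = [A,B]\<close> from
  \<open>\<alpha> = [A,D] + AC - BA\<close> expresses \<open>B A\<^sup>2\<close> through \<open>A B A\<close>, \<open>A\<^sup>2 B\<close>, \<open>B A\<close>, \<open>A B\<close>, \<open>\<alpha>\<close>, \<open>A \<delta>\<close>
  and \<open>A\<^sup>2\<close>, so by induction every \<open>B A\<^sup>n\<close> is congruent to a polynomial in \<open>A\<close>. Consequently
  the elements congruent to polynomials in \<open>A\<close> are closed under left multiplication by
  \<open>A\<close>, \<open>B\<close>, \<open>C\<close> and \<open>D\<close> (the last one needs \<open>char \<noteq> 2\<close>), hence contain every word.\<close>

lemma fa_mul_assoc: "fa_mul (fa_mul p q) r = fa_mul p (fa_mul q r)"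
proof (rule ext)
  fix w :: "gen list"
  define n where "n = length w"
  define g where "g = (\<lambda>j i. p (take j w) * q (take i (drop j w)) * r (drop (j+i) w))"
  have "fa_mul (fa_mul p q) r w = (\<Sum>k\<le>n. \<Sum>j\<le>k. g j (k - j))"
    unfolding fa_mul_def n_def g_def
    by (auto simp: sum_distrib_right min_def drop_take intro!: sum.cong)
  also have "\<dots> = (\<Sum>(j,i)\<in>{(j,i). j+i \<le> n}. g j i)"
    by (rule sum.triangle_reindex_eq[symmetric])
  also have "{(j,i). j+i \<le> n} = (SIGMA j:{..n}. {..n-j})" by auto
  also have "(\<Sum>(j,i)\<in>(SIGMA j:{..n}. {..n-j}). g j i) = (\<Sum>j\<le>n. \<Sum>i\<le>n-j. g j i)"
    by (rule sum.Sigma[symmetric]) auto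
  also have "\<dots> = fa_mul p (fa_mul q r) w"
    unfolding fa_mul_def n_def g_def
    by (auto simp: sum_distrib_left mult.assoc add.commute intro!: sum.cong)
  finally show "fa_mul (fa_mul p q) r w = fa_mul p (fa_mul q r) w" .
qed

lemma fa_mul_const_left: "fa_mul (fa_const s) p = (\<lambda>w. s * p w)"
proof (rule ext)
  fix w :: "gen list"
  show "fa_mul (fa_const s) p w = s * p w"
    by (cases w) (simp_all add: fa_mul_def fa_const_def sum.atMost_Suc_shift del: sum.atMost_Suc)
qed

lemma fa_mul_const_right: "fa_mul p (fa_const s) = (\<lambda>w. p w * s)"
proof (rule ext)
  fix w :: "gen list"
  have "fa_mul p (fa_const s) w = (\<Sum>k\<le>length w. if k = length w then p w * s else 0)"
    unfolding fa_mul_def fa_const_def by (rule sum.cong) auto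
  then show "fa_mul p (fa_const s) w = p w * s" by simp
qed

lemma fa_mul_add_left: "fa_mul (\<lambda>w. q w + r w) p = (\<lambda>w. fa_mul q p w + fa_mul r p w)"
  by (auto simp: fa_mul_def distrib_right sum.distrib)

lemma fa_mul_add_right: "fa_mul p (\<lambda>w. q w + r w) = (\<lambda>w. fa_mul p q w + fa_mul p r w)"
  by (auto simp: fa_mul_def distrib_left sum.distrib)

text \<open>Without the finiteness condition of \<open>fa_valid\<close>, \<open>fa_mul\<close> is the product of
  noncommutative formal power series; these form a ring containing the free algebra
  as the finitely supported series.\<close>

typedef (overloaded) 'a nc_series = "UNIV :: (gen list \<Rightarrow> 'a::field) set" by simp

setup_lifting type_definition_nc_series

instantiation nc_series :: (field) ring_1
begin
lift_definition zero_nc_series :: "'a nc_series" is "\<lambda>w. 0" .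
lift_definition one_nc_series :: "'a nc_series" is "fa_const 1" .
lift_definition plus_nc_series :: "'a nc_series \<Rightarrow> 'a nc_series \<Rightarrow> 'a nc_series"
  is "\<lambda>p q w. p w + q w" .
lift_definition minus_nc_series :: "'a nc_series \<Rightarrow> 'a nc_series \<Rightarrow> 'a nc_series"
  is "\<lambda>p q w. p w - q w" .
lift_definition uminus_nc_series :: "'a nc_series \<Rightarrow> 'a nc_series" is "\<lambda>p w. - p w" .
lift_definition times_nc_series :: "'a nc_series \<Rightarrow> 'a nc_series \<Rightarrow> 'a nc_series" is fa_mul .
instance
proof
  fix x y z :: "'a nc_series"
  show "x * y * z = x * (y * z)" by transfer (rule fa_mul_assoc)
  show "1 * x = x" by transfer (simp add: fa_mul_const_left)
  show "x * 1 = x" by transfer (simp add: fa_mul_const_right)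
  show "(x + y) * z = x * z + y * z" by transfer (rule fa_mul_add_left)
  show "x * (y + z) = x * y + x * z" by transfer (rule fa_mul_add_right)
  show "x + y + z = x + (y + z)" by transfer (simp add: add.assoc)
  show "x + y = y + x" by transfer (simp add: add.commute)
  show "0 + x = x" by transfer simp
  show "- x + x = 0" by transfer simp
  show "x - y = x + - y" by transfer simp
  show "(0::'a nc_series) \<noteq> 1" by transfer (auto simp: fa_const_def fun_eq_iff)
qed
end

lift_definition scalar :: "'a::field \<Rightarrow> 'a nc_series" is fa_const .
lift_definition nc_gen :: "gen \<Rightarrow> 'a::field nc_series" is fa_gen .

abbreviation "gA \<equiv> nc_gen GA"
abbreviation "gB \<equiv> nc_gen GB"
abbreviation "gC \<equiv> nc_gen GC"
abbreviation "gD \<equiv> nc_gen GD"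

lemma scalar_commute: "scalar s * x = x * scalar s"
  by transfer (simp add: fa_mul_const_left fa_mul_const_right mult.commute)

lemma scalar_left_commute: "x * (scalar s * y) = scalar s * (x * y)"
  by (metis mult.assoc scalar_commute)

lemma scalar_mult: "scalar s * scalar t = scalar (s * t)"
  by transfer (subst fa_mul_const_left, simp add: fa_const_def fun_eq_iff)

lemma scalar_add: "scalar s + scalar t = scalar (s + t)"
  by transfer (auto simp: fa_const_def)

lemma scalar_diff: "scalar s - scalar t = scalar (s - t)"
  by transfer (auto simp: fa_const_def)

lemma scalar_0 [simp]: "scalar 0 = 0"
  by transfer (auto simp: fa_const_def)

lemma scalar_1 [simp]: "scalar 1 = 1"
  by transfer simp

lemma scalar_2: "scalar 2 * x = x + x"
  by (metis one_add_one scalar_add scalar_1 distrib_right mult_1)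

lemma uminus_eq_scalar_mult: "- x = scalar (-1) * x"
  by transfer (simp add: fa_mul_const_left)

lemma Rep_nc_series_sum: "Rep_nc_series (sum f S) w = (\<Sum>i\<in>S. Rep_nc_series (f i) w)"
  by (induction S rule: infinite_finite_induct) (auto simp: zero_nc_series.rep_eq plus_nc_series.rep_eq)

lemma Rep_nc_series_power: "Rep_nc_series (x ^ n) = fa_pow (Rep_nc_series x) n"
  by (induction n) (auto simp: one_nc_series.rep_eq times_nc_series.rep_eq)

lemma Rep_nc_series_add: "Rep_nc_series (x + y) = fa_add (Rep_nc_series x) (Rep_nc_series y)"
  by (simp add: plus_nc_series.rep_eq fa_add_def)

lemma Rep_nc_series_diff: "Rep_nc_series (x - y) = fa_sub (Rep_nc_series x) (Rep_nc_series y)"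
  by (simp add: minus_nc_series.rep_eq fa_sub_def)

lemma Rep_nc_series_scalar_mult: "Rep_nc_series (scalar s * y) = fa_smult s (Rep_nc_series y)"
  by (simp add: times_nc_series.rep_eq scalar.rep_eq fa_mul_const_left fa_smult_def)

lemmas Rep_nc_series_simps = Rep_nc_series_add Rep_nc_series_diff times_nc_series.rep_eq
  Rep_nc_series_scalar_mult scalar.rep_eq nc_gen.rep_eq

definition nc_poly :: "'a::field nc_series \<Rightarrow> bool" where
  "nc_poly x \<longleftrightarrow> fa_valid (Rep_nc_series x)"

lemma fa_mul_support:
  "{w. fa_mul p q w \<noteq> 0} \<subseteq> (\<lambda>(u,v). u @ v) ` ({u. p u \<noteq> 0} \<times> {v. q v \<noteq> 0})"
proof
  fix w assume "w \<in> {w. fa_mul p q w \<noteq> 0}"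
  then obtain k where "p (take k w) * q (drop k w) \<noteq> 0"
    unfolding fa_mul_def by (meson mem_Collect_eq sum.neutral)
  then show "w \<in> (\<lambda>(u,v). u @ v) ` ({u. p u \<noteq> 0} \<times> {v. q v \<noteq> 0})"
    by (intro image_eqI[where x="(take k w, drop k w)"]) auto
qed

lemma nc_poly_mult: "nc_poly x \<Longrightarrow> nc_poly y \<Longrightarrow> nc_poly (x * y)"
  unfolding nc_poly_def fa_valid_def times_nc_series.rep_eq
  by (rule finite_subset[OF fa_mul_support]) auto

lemma nc_poly_add: "nc_poly x \<Longrightarrow> nc_poly y \<Longrightarrow> nc_poly (x + y)"
  unfolding nc_poly_def fa_valid_def plus_nc_series.rep_eq
  by (rule finite_subset[of _ "{w. Rep_nc_series x w \<noteq> 0} \<union> {w. Rep_nc_series y w \<noteq> 0}"]) auto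

lemma nc_poly_scalar: "nc_poly (scalar s)"
  unfolding nc_poly_def fa_valid_def scalar.rep_eq fa_const_def
  by (rule finite_subset[of _ "{[]}"]) auto

lemma nc_poly_0: "nc_poly 0"
  using nc_poly_scalar[of 0] by simp

lemma nc_poly_1: "nc_poly 1"
  using nc_poly_scalar[of 1] by simp

lemma nc_poly_gen: "nc_poly (nc_gen g)"
  unfolding nc_poly_def fa_valid_def nc_gen.rep_eq fa_gen_def
  by (rule finite_subset[of _ "{[g]}"]) auto

lemma nc_poly_diff: "nc_poly x \<Longrightarrow> nc_poly y \<Longrightarrow> nc_poly (x - y)"
  by (metis diff_conv_add_uminus nc_poly_add nc_poly_mult nc_poly_scalar uminus_eq_scalar_mult)

lemma nc_poly_power: "nc_poly x \<Longrightarrow> nc_poly (x ^ n)"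
  by (induction n) (simp_all add: nc_poly_mult nc_poly_1)

definition racah_ideal_nc :: "'a::field nc_series set" where
  "racah_ideal_nc = {x. Rep_nc_series x \<in> racah_ideal}"

definition I_pre_nc :: "'a::field \<Rightarrow> 'a \<Rightarrow> 'a \<Rightarrow> 'a \<Rightarrow> 'a nc_series set" where
  "I_pre_nc a b c \<nu> = {x. Rep_nc_series x \<in> I_pre a b c \<nu>}"

lemma racah_ideal_nc_rel: "Rep_nc_series x \<in> racah_rels \<Longrightarrow> x \<in> racah_ideal_nc"
  unfolding racah_ideal_nc_def racah_ideal_def by (simp add: two_ideal.ti_gen)

lemma racah_ideal_nc_add: "x \<in> racah_ideal_nc \<Longrightarrow> y \<in> racah_ideal_nc \<Longrightarrow> x + y \<in> racah_ideal_nc"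
  unfolding racah_ideal_nc_def racah_ideal_def by (simp add: Rep_nc_series_add two_ideal.ti_add)

lemma racah_ideal_nc_lmult: "x \<in> racah_ideal_nc \<Longrightarrow> nc_poly u \<Longrightarrow> u * x \<in> racah_ideal_nc"
  unfolding racah_ideal_nc_def racah_ideal_def nc_poly_def
  by (simp add: times_nc_series.rep_eq two_ideal.ti_lmul)

lemma racah_ideal_nc_rmult: "x \<in> racah_ideal_nc \<Longrightarrow> nc_poly u \<Longrightarrow> x * u \<in> racah_ideal_nc"
  unfolding racah_ideal_nc_def racah_ideal_def nc_poly_def
  by (simp add: times_nc_series.rep_eq two_ideal.ti_rmul)

lemma racah_ideal_nc_diff: "x \<in> racah_ideal_nc \<Longrightarrow> y \<in> racah_ideal_nc \<Longrightarrow> x - y \<in> racah_ideal_nc"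
  by (metis diff_conv_add_uminus uminus_eq_scalar_mult nc_poly_scalar
      racah_ideal_nc_add racah_ideal_nc_lmult)

lemma fa_add_fa_zero: "fa_add p fa_zero = p" "fa_add fa_zero p = p"
  by (auto simp: fa_add_def fa_zero_def)

lemma racah_ideal_nc_subset_I_pre_nc: "x \<in> racah_ideal_nc \<Longrightarrow> x \<in> I_pre_nc a b c \<nu>"
  unfolding racah_ideal_nc_def I_pre_nc_def I_pre_def
  by simp (metis fa_add_fa_zero(1) left_ideal.li_zero)

lemma I_pre_nc_lmult_gen:
  assumes "Rep_nc_series x \<in> I_gens a b c \<nu>" "nc_poly u"
  shows "u * x \<in> I_pre_nc a b c \<nu>"
proof -
  have "fa_mul (Rep_nc_series u) (Rep_nc_series x) \<in> left_ideal (I_gens a b c \<nu>)"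
    using assms by (simp add: nc_poly_def left_ideal.li_gen left_ideal.li_lmul)
  then show ?thesis
    unfolding I_pre_nc_def I_pre_def racah_ideal_def
    by (simp add: times_nc_series.rep_eq) (metis fa_add_fa_zero(2) two_ideal.ti_zero)
qed

lemma I_pre_nc_add:
  assumes "x \<in> I_pre_nc a b c \<nu>" "y \<in> I_pre_nc a b c \<nu>"
  shows "x + y \<in> I_pre_nc a b c \<nu>"
proof -
  obtain j1 l1 where 1: "Rep_nc_series x = fa_add j1 l1" "j1 \<in> racah_ideal"
      "l1 \<in> left_ideal (I_gens a b c \<nu>)"
    using assms(1) unfolding I_pre_nc_def I_pre_def by auto
  obtain j2 l2 where 2: "Rep_nc_series y = fa_add j2 l2" "j2 \<in> racah_ideal"
      "l2 \<in> left_ideal (I_gens a b c \<nu>)"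
    using assms(2) unfolding I_pre_nc_def I_pre_def by auto
  have "Rep_nc_series (x + y) = fa_add (fa_add j1 j2) (fa_add l1 l2)"
    by (simp add: Rep_nc_series_add 1 2 fa_add_def fun_eq_iff algebra_simps)
  then show ?thesis
    using 1 2 unfolding I_pre_nc_def I_pre_def racah_ideal_def
    by (auto intro: two_ideal.ti_add left_ideal.li_add)
qed

lemma I_pre_nc_lmult:
  assumes "x \<in> I_pre_nc a b c \<nu>" "nc_poly u"
  shows "u * x \<in> I_pre_nc a b c \<nu>"
proof -
  obtain j l where jl: "Rep_nc_series x = fa_add j l" "j \<in> racah_ideal"
      "l \<in> left_ideal (I_gens a b c \<nu>)"
    using assms(1) unfolding I_pre_nc_def I_pre_def by auto
  have "Rep_nc_series (u * x) = fa_add (fa_mul (Rep_nc_series u) j) (fa_mul (Rep_nc_series u) l)"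
    by (simp add: times_nc_series.rep_eq jl fa_add_def fa_mul_add_right)
  then show ?thesis
    using jl assms(2) unfolding I_pre_nc_def I_pre_def racah_ideal_def nc_poly_def
    by (auto intro: two_ideal.ti_lmul left_ideal.li_lmul)
qed

lemma I_pre_nc_zero: "0 \<in> I_pre_nc a b c \<nu>"
proof -
  have "Rep_nc_series 0 = fa_add fa_zero fa_zero"
    by (simp add: zero_nc_series.rep_eq fa_zero_def fa_add_def)
  then show ?thesis
    unfolding I_pre_nc_def I_pre_def racah_ideal_def
    using two_ideal.ti_zero left_ideal.li_zero by blast
qed

definition alpha_nc :: "'a::field nc_series" where
  "alpha_nc = (gA * gD - gD * gA) + (gA * gC - gB * gA)"

definition delta_nc :: "'a::field nc_series" where
  "delta_nc = gA + (gB + gC)"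

definition rel_AB :: "'a::field nc_series" where
  "rel_AB = (gA * gB - gB * gA) - scalar 2 * gD"

definition rel_CA :: "'a::field nc_series" where
  "rel_CA = (gC * gA - gA * gC) - scalar 2 * gD"

lemma Rep_alpha_nc: "Rep_nc_series alpha_nc = r_alpha"
  by (simp add: alpha_nc_def r_alpha_def fa_comm_def Rep_nc_series_simps)

lemma Rep_delta_nc: "Rep_nc_series delta_nc = r_delta"
  by (simp add: delta_nc_def r_delta_def Rep_nc_series_simps)

lemma nc_poly_alpha_nc: "nc_poly alpha_nc"
  unfolding alpha_nc_def by (intro nc_poly_add nc_poly_diff nc_poly_mult nc_poly_gen)

lemma nc_poly_delta_nc: "nc_poly delta_nc"
  unfolding delta_nc_def by (intro nc_poly_add nc_poly_gen)

lemma rel_AB_in_racah_ideal_nc: "rel_AB \<in> racah_ideal_nc"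
  by (rule racah_ideal_nc_rel)
    (simp only: rel_AB_def Rep_nc_series_diff Rep_nc_series_scalar_mult,
     simp add: racah_rels_def fa_comm_def Rep_nc_series_simps)

lemma rel_CA_in_racah_ideal_nc: "rel_CA \<in> racah_ideal_nc"
  by (rule racah_ideal_nc_rel)
    (simp only: rel_CA_def Rep_nc_series_diff Rep_nc_series_scalar_mult,
     simp add: racah_rels_def fa_comm_def Rep_nc_series_simps)

lemma alpha_nc_commutator_in_racah_ideal_nc: "alpha_nc * gA - gA * alpha_nc \<in> racah_ideal_nc"
  by (rule racah_ideal_nc_rel)
    (auto simp: racah_rels_def fa_comm_def Rep_nc_series_simps Rep_alpha_nc)

lemma delta_nc_commutator_in_racah_ideal_nc: "delta_nc * gA - gA * delta_nc \<in> racah_ideal_nc"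
proof -
  have "delta_nc * gA - gA * delta_nc = rel_CA - rel_AB"
    by (simp add: delta_nc_def rel_AB_def rel_CA_def algebra_simps)
  then show ?thesis
    by (metis racah_ideal_nc_diff rel_AB_in_racah_ideal_nc rel_CA_in_racah_ideal_nc)
qed

lemma commutator_power_in_racah_ideal_nc:
  assumes "z * gA - gA * z \<in> racah_ideal_nc" "nc_poly z"
  shows "z * gA ^ n - gA ^ n * z \<in> racah_ideal_nc"
proof (induction n)
  case 0
  then show ?case using racah_ideal_nc_diff[OF assms(1) assms(1)] by simp
next
  case (Suc n)
  have "z * gA ^ Suc n - gA ^ Suc n * z = (z * gA - gA * z) * gA ^ n + gA * (z * gA ^ n - gA ^ n * z)"
    by (simp add: algebra_simps)
  then show ?case
    using Suc assms
    by (metis racah_ideal_nc_add racah_ideal_nc_lmult racah_ideal_nc_rmult nc_poly_gen nc_poly_power)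
qed

lemma central_acts_on_power_as_scalar:
  assumes "z * gA - gA * z \<in> racah_ideal_nc" "nc_poly z"
    and "Rep_nc_series (z - scalar s) \<in> I_gens a b c \<nu>"
  shows "z * gA ^ n - scalar s * gA ^ n \<in> I_pre_nc a b c \<nu>"
proof -
  have "z * gA ^ n - scalar s * gA ^ n = (z * gA ^ n - gA ^ n * z) + gA ^ n * (z - scalar s)"
    by (simp add: algebra_simps scalar_commute)
  then show ?thesis
    using assms
    by (metis I_pre_nc_add I_pre_nc_lmult_gen racah_ideal_nc_subset_I_pre_nc
        commutator_power_in_racah_ideal_nc nc_poly_power nc_poly_gen)
qed

lemma alpha_nc_power: "alpha_nc * gA ^ n - scalar (zeta a b c \<nu>) * gA ^ n \<in> I_pre_nc a b c \<nu>"
  by (rule central_acts_on_power_as_scalar[OF alpha_nc_commutator_in_racah_ideal_nc nc_poly_alpha_nc])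
    (simp add: I_gens_def Rep_nc_series_simps Rep_alpha_nc)

lemma delta_nc_power: "delta_nc * gA ^ n - scalar (eta a b c \<nu>) * gA ^ n \<in> I_pre_nc a b c \<nu>"
  by (rule central_acts_on_power_as_scalar[OF delta_nc_commutator_in_racah_ideal_nc nc_poly_delta_nc])
    (simp add: I_gens_def Rep_nc_series_simps Rep_delta_nc)

lemma B_A_squared:
  "gB * gA ^ 2 = 2 * (gA * gB * gA) - gA ^ 2 * gB + 2 * alpha_nc - 2 * (gA * delta_nc)
     + 2 * gA ^ 2 + 2 * (gA * gB) + 2 * (gB * gA) + (gA * rel_AB - rel_AB * gA)"
  by (simp add: alpha_nc_def delta_nc_def rel_AB_def scalar_2 mult_2 power2_eq_square algebra_simps)

inductive_set A_span :: "'a::field nc_series set" where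
  A_span_zero: "0 \<in> A_span"
| A_span_step: "y \<in> A_span \<Longrightarrow> scalar c * gA ^ i + y \<in> A_span"

lemma A_span_add: "x \<in> A_span \<Longrightarrow> y \<in> A_span \<Longrightarrow> x + y \<in> A_span"
  by (induction x rule: A_span.induct) (auto simp: add.assoc intro: A_span_step)

lemma A_span_scalar_mult: "x \<in> A_span \<Longrightarrow> scalar s * x \<in> A_span"
proof (induction x rule: A_span.induct)
  case A_span_zero
  then show ?case by (simp add: A_span.A_span_zero)
next
  case (A_span_step y c i)
  have "scalar s * (scalar c * gA ^ i + y) = scalar (s * c) * gA ^ i + scalar s * y"
    by (simp add: distrib_left mult.assoc[symmetric] scalar_mult)
  then show ?case using A_span_step by (simp add: A_span.A_span_step)
qed

lemma A_span_gA_mult: "x \<in> A_span \<Longrightarrow> gA * x \<in> A_span"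
proof (induction x rule: A_span.induct)
  case A_span_zero
  then show ?case by (simp add: A_span.A_span_zero)
next
  case (A_span_step y c i)
  have "gA * (scalar c * gA ^ i + y) = scalar c * gA ^ Suc i + gA * y"
    by (simp add: distrib_left scalar_left_commute)
  then show ?case using A_span.A_span_step[OF A_span_step.IH, of c "Suc i"] by simp
qed

lemma A_span_power: "gA ^ i \<in> A_span"
  using A_span_step[OF A_span_zero, of 1 i] by simp

lemma A_span_scalar: "scalar s \<in> A_span"
  using A_span_step[OF A_span_zero, of s 0] by simp

lemma nc_poly_A_span: "x \<in> A_span \<Longrightarrow> nc_poly x"
  by (induction x rule: A_span.induct)
    (auto intro: nc_poly_0 nc_poly_add nc_poly_mult nc_poly_scalar nc_poly_power nc_poly_gen)

lemma A_span_eq_sum: "x \<in> A_span \<Longrightarrow> \<exists>n coef. x = (\<Sum>i<n. scalar (coef i) * gA ^ i)"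
proof (induction x rule: A_span.induct)
  case A_span_zero
  then show ?case by (auto intro!: exI[of _ 0])
next
  case (A_span_step y c j)
  then obtain n coef where y: "y = (\<Sum>i<n. scalar (coef i) * gA ^ i)" by auto
  define N where "N = max n (Suc j)"
  define coef' where "coef' = (\<lambda>k. (if k < n then coef k else 0) + (if k = j then c else 0))"
  have "(\<Sum>i<N. scalar (coef' i) * gA ^ i)
      = (\<Sum>i<N. scalar (if i < n then coef i else 0) * gA ^ i)
        + (\<Sum>i<N. scalar (if i = j then c else 0) * gA ^ i)"
    by (simp add: coef'_def scalar_add[symmetric] distrib_right sum.distrib)
  also have "(\<Sum>i<N. scalar (if i < n then coef i else 0) * gA ^ i) = y"
    unfolding y by (rule sum.mono_neutral_cong_right) (auto simp: N_def)
  also have "(\<Sum>i<N. scalar (if i = j then c else 0) * gA ^ i)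
      = (\<Sum>i<N. if i = j then scalar c * gA ^ j else 0)"
    by (rule sum.cong) auto
  also have "\<dots> = scalar c * gA ^ j" by (simp add: N_def less_max_iff_disj)
  finally show ?case by (auto simp: add.commute intro!: exI[of _ N] exI[of _ coef'])
qed

definition A_reducible :: "'a::field \<Rightarrow> 'a \<Rightarrow> 'a \<Rightarrow> 'a \<Rightarrow> 'a nc_series set" where
  "A_reducible a b c \<nu> = {x. \<exists>y\<in>A_span. x - y \<in> I_pre_nc a b c \<nu>}"

context
  fixes a b c \<nu> :: "'a::field"
begin

lemma A_reducible_span: "y \<in> A_span \<Longrightarrow> y \<in> A_reducible a b c \<nu>"
  unfolding A_reducible_def using I_pre_nc_zero[of a b c \<nu>] by (intro CollectI bexI[of _ y]) simp_all

lemma A_reducible_congruent: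
  assumes "x' \<in> A_reducible a b c \<nu>" "x - x' \<in> I_pre_nc a b c \<nu>"
  shows "x \<in> A_reducible a b c \<nu>"
proof -
  obtain y where y: "y \<in> A_span" "x' - y \<in> I_pre_nc a b c \<nu>"
    using assms(1) unfolding A_reducible_def by auto
  have "x - y = (x - x') + (x' - y)" by simp
  then have "x - y \<in> I_pre_nc a b c \<nu>" using I_pre_nc_add[OF assms(2) y(2)] by argo
  with y(1) show ?thesis unfolding A_reducible_def by blast
qed

lemma A_reducible_I_pre_nc: "x \<in> I_pre_nc a b c \<nu> \<Longrightarrow> x \<in> A_reducible a b c \<nu>"
  using A_reducible_congruent[OF A_reducible_span[OF A_span_zero]] by simp

lemma A_reducible_add:
  assumes "x1 \<in> A_reducible a b c \<nu>" "x2 \<in> A_reducible a b c \<nu>"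
  shows "x1 + x2 \<in> A_reducible a b c \<nu>"
proof -
  obtain y1 y2 where y: "y1 \<in> A_span" "x1 - y1 \<in> I_pre_nc a b c \<nu>"
      "y2 \<in> A_span" "x2 - y2 \<in> I_pre_nc a b c \<nu>"
    using assms unfolding A_reducible_def by auto
  have "x1 + x2 - (y1 + y2) = (x1 - y1) + (x2 - y2)" by (simp add: algebra_simps)
  then have "x1 + x2 - (y1 + y2) \<in> I_pre_nc a b c \<nu>" using I_pre_nc_add[OF y(2) y(4)] by argo
  with A_span_add[OF y(1) y(3)] show ?thesis unfolding A_reducible_def by blast
qed

lemma A_reducible_lmult:
  assumes "x \<in> A_reducible a b c \<nu>" "nc_poly u"
    and "\<And>y. y \<in> A_span \<Longrightarrow> u * y \<in> A_reducible a b c \<nu>"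
  shows "u * x \<in> A_reducible a b c \<nu>"
proof -
  obtain y where y: "y \<in> A_span" "x - y \<in> I_pre_nc a b c \<nu>"
    using assms(1) unfolding A_reducible_def by auto
  have "u * x - u * y = u * (x - y)" by (simp add: algebra_simps)
  then have "u * x - u * y \<in> I_pre_nc a b c \<nu>" using I_pre_nc_lmult[OF y(2) assms(2)] by simp
  then show ?thesis using A_reducible_congruent assms(3)[OF y(1)] by blast
qed

lemma A_reducible_scalar_mult: "x \<in> A_reducible a b c \<nu> \<Longrightarrow> scalar s * x \<in> A_reducible a b c \<nu>"
  by (rule A_reducible_lmult) (auto intro: nc_poly_scalar A_reducible_span A_span_scalar_mult)

lemma A_reducible_gA_mult: "x \<in> A_reducible a b c \<nu> \<Longrightarrow> gA * x \<in> A_reducible a b c \<nu>"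
  by (rule A_reducible_lmult) (auto intro: nc_poly_gen A_reducible_span A_span_gA_mult)

lemma A_reducible_diff:
  "x \<in> A_reducible a b c \<nu> \<Longrightarrow> y \<in> A_reducible a b c \<nu> \<Longrightarrow> x - y \<in> A_reducible a b c \<nu>"
  by (metis A_reducible_add A_reducible_scalar_mult uminus_eq_scalar_mult diff_conv_add_uminus)

lemma A_reducible_sum:
  "(\<And>i. i \<in> S \<Longrightarrow> f i \<in> A_reducible a b c \<nu>) \<Longrightarrow> sum f S \<in> A_reducible a b c \<nu>"
  by (induction S rule: infinite_finite_induct)
    (auto intro: A_reducible_add A_reducible_span A_span_zero)

lemma A_reducible_mult_span:
  assumes "\<And>i. u * gA ^ i \<in> A_reducible a b c \<nu>" "y \<in> A_span"
  shows "u * y \<in> A_reducible a b c \<nu>"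
  using assms(2)
proof (induction y rule: A_span.induct)
  case A_span_zero
  then show ?case by (simp add: A_reducible_span A_span.A_span_zero)
next
  case (A_span_step y c i)
  have "u * (scalar c * gA ^ i + y) = scalar c * (u * gA ^ i) + u * y"
    by (simp add: distrib_left scalar_left_commute)
  then show ?case using A_span_step assms(1) by (simp add: A_reducible_add A_reducible_scalar_mult)
qed

lemma A_reducible_double: "x \<in> A_reducible a b c \<nu> \<Longrightarrow> 2 * x \<in> A_reducible a b c \<nu>"
  by (simp add: mult_2 A_reducible_add)

lemma B_minus_thetas_in_I_pre_nc: "gB - scalar (thetas b \<nu> 0) \<in> I_pre_nc a b c \<nu>"
  using I_pre_nc_lmult_gen[OF _ nc_poly_1, of "gB - scalar (thetas b \<nu> 0)" a b c \<nu>]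
  by (simp add: I_gens_def Rep_nc_series_simps)

lemma BA_relation_in_I_pre_nc:
  "(gB - scalar (thetas b \<nu> 1)) * (gA - scalar (theta a \<nu> 0)) - scalar (phi a b c \<nu> 1)
     \<in> I_pre_nc a b c \<nu>"
  using I_pre_nc_lmult_gen[OF _ nc_poly_1, of _ a b c \<nu>]
  by (simp add: I_gens_def Rep_nc_series_simps)

lemma B_reducible: "gB \<in> A_reducible a b c \<nu>"
  by (rule A_reducible_congruent[OF A_reducible_span[OF A_span_scalar] B_minus_thetas_in_I_pre_nc])

lemma BA_reducible: "gB * gA \<in> A_reducible a b c \<nu>"
proof -
  define t0 t1 ph where "t0 = theta a \<nu> 0" and "t1 = thetas b \<nu> 1" and "ph = phi a b c \<nu> 1"
  have "(gB - scalar t1) * (gA - scalar t0) = gB * gA - scalar t0 * gB - scalar t1 * gA + scalar (t1 * t0)"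
    by (simp add: left_diff_distrib right_diff_distrib scalar_commute[of t0 gB] scalar_mult)
  then have expand: "gB * gA = ((gB - scalar t1) * (gA - scalar t0) - scalar ph)
      + scalar t0 * gB + (scalar t1 * gA ^ 1 + scalar (ph - t1 * t0))"
    by (simp add: algebra_simps flip: scalar_diff)
  have "(gB - scalar t1) * (gA - scalar t0) - scalar ph \<in> A_reducible a b c \<nu>"
    unfolding t0_def t1_def ph_def by (intro A_reducible_I_pre_nc BA_relation_in_I_pre_nc)
  moreover have "scalar t1 * gA ^ 1 + scalar (ph - t1 * t0) \<in> A_span"
    by (intro A_span_step A_span_scalar)
  ultimately show ?thesis
    unfolding expand
    using A_reducible_add A_reducible_scalar_mult A_reducible_span B_reducible by blast
qed

lemma alpha_power_reducible: "alpha_nc * gA ^ n \<in> A_reducible a b c \<nu>"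
  by (rule A_reducible_congruent[OF A_reducible_span alpha_nc_power])
    (intro A_span_scalar_mult A_span_power)

lemma delta_power_reducible: "delta_nc * gA ^ n \<in> A_reducible a b c \<nu>"
  by (rule A_reducible_congruent[OF A_reducible_span delta_nc_power])
    (intro A_span_scalar_mult A_span_power)

lemma B_power_reducible: "gB * gA ^ n \<in> A_reducible a b c \<nu>"
proof (induction n rule: induct_nat_012)
  case 0
  then show ?case using B_reducible by simp
next
  case 1
  then show ?case using BA_reducible by simp
next
  case (ge2 n)
  have "gB * gA ^ Suc (Suc n) = (gB * gA ^ 2) * gA ^ n"
    by (simp add: mult.assoc power2_eq_square)
  also have "\<dots> = 2 * (gA * (gB * gA ^ Suc n)) - gA * (gA * (gB * gA ^ n))
      + 2 * (alpha_nc * gA ^ n) - 2 * (gA * (delta_nc * gA ^ n)) + 2 * gA ^ Suc (Suc n)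
      + 2 * (gA * (gB * gA ^ n)) + 2 * (gB * gA ^ Suc n) + (gA * rel_AB - rel_AB * gA) * gA ^ n"
    unfolding B_A_squared by (simp add: algebra_simps power2_eq_square)
  finally have expand: "gB * gA ^ Suc (Suc n) = \<dots>" .
  have "(gA * rel_AB - rel_AB * gA) * gA ^ n \<in> racah_ideal_nc"
    by (intro racah_ideal_nc_rmult racah_ideal_nc_diff racah_ideal_nc_lmult rel_AB_in_racah_ideal_nc
        nc_poly_gen nc_poly_power)
  then show ?case
    unfolding expand
    by (intro A_reducible_add A_reducible_diff A_reducible_double A_reducible_gA_mult ge2
        alpha_power_reducible delta_power_reducible A_reducible_I_pre_nc
        racah_ideal_nc_subset_I_pre_nc A_reducible_span A_span_power)
qed

lemma gen_mult_span_reducible: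
  assumes char: "(2::'a) \<noteq> 0" and y: "y \<in> A_span"
  shows "nc_gen g * y \<in> A_reducible a b c \<nu>"
proof -
  have B: "gB * y \<in> A_reducible a b c \<nu>"
    by (rule A_reducible_mult_span[OF B_power_reducible y])
  have A: "gA * y \<in> A_reducible a b c \<nu>"
    by (rule A_reducible_span[OF A_span_gA_mult[OF y]])
  show ?thesis
  proof (cases g)
    case GA
    then show ?thesis using A by simp
  next
    case GB
    then show ?thesis using B by simp
  next
    case GC
    have "gC * y = delta_nc * y - gA * y - gB * y"
      by (simp add: delta_nc_def algebra_simps)
    moreover have "delta_nc * y \<in> A_reducible a b c \<nu>"
      by (rule A_reducible_mult_span[OF delta_power_reducible y])
    ultimately show ?thesis using GC A B by (simp add: A_reducible_diff)
  next
    case GD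
    have "gD * y = scalar (1/2) * (scalar 2 * gD * y)"
      using char by (simp add: mult.assoc[symmetric] scalar_mult)
    also have "scalar 2 * gD = gA * gB - gB * gA - rel_AB"
      by (simp add: rel_AB_def)
    finally have "gD * y = scalar (1/2) * (gA * (gB * y) - gB * (gA * y) - rel_AB * y)"
      by (simp add: left_diff_distrib mult.assoc)
    moreover have "rel_AB * y \<in> A_reducible a b c \<nu>"
      by (intro A_reducible_I_pre_nc racah_ideal_nc_subset_I_pre_nc racah_ideal_nc_rmult
          rel_AB_in_racah_ideal_nc nc_poly_A_span y)
    moreover have "gB * (gA * y) \<in> A_reducible a b c \<nu>"
      by (rule A_reducible_mult_span[OF B_power_reducible A_span_gA_mult[OF y]])
    ultimately show ?thesis
      using GD A_reducible_gA_mult[OF B] by (simp add: A_reducible_diff A_reducible_scalar_mult)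
  qed
qed

lemma gen_mult_reducible:
  "(2::'a) \<noteq> 0 \<Longrightarrow> x \<in> A_reducible a b c \<nu> \<Longrightarrow> nc_gen g * x \<in> A_reducible a b c \<nu>"
  by (rule A_reducible_lmult) (auto intro: nc_poly_gen gen_mult_span_reducible)

end

lemma fa_mul_gen_indicator:
  "fa_mul (fa_gen g) (\<lambda>v. if v = w then 1 else 0) = (\<lambda>v. if v = g # w then (1::'a::field) else 0)"
proof (rule ext)
  fix v :: "gen list"
  have "fa_mul (fa_gen g) (\<lambda>v. if v = w then 1 else 0) v
      = (\<Sum>k\<le>length v. if k = 1 then (if v = g # w then (1::'a) else 0) else 0)"
    unfolding fa_mul_def fa_gen_def
  proof (rule sum.cong)
    fix k assume k: "k \<in> {..length v}"
    show "(if take k v = [g] then 1 else 0) * (if drop k v = w then 1 else 0)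
        = (if k = 1 then (if v = g # w then (1::'a) else 0) else 0)"
    proof (cases "take k v = [g]")
      case True
      then have "length (take k v) = 1" by simp
      then have "k = 1" using k by auto
      then show ?thesis using True by (cases v) auto
    next
      case False
      then show ?thesis by (cases v) auto
    qed
  qed simp
  also have "\<dots> = (if v = g # w then 1 else 0)" by auto
  finally show "fa_mul (fa_gen g) (\<lambda>v. if v = w then 1 else 0) v = (if v = g # w then (1::'a) else 0)" .
qed

lift_definition nc_word :: "gen list \<Rightarrow> 'a::field nc_series" is "\<lambda>w v. if v = w then 1 else 0" .

lemma nc_word_Nil: "nc_word [] = 1"
  by transfer (simp add: fa_const_def)

lemma nc_word_Cons: "nc_word (g # w) = nc_gen g * nc_word w"
  by transfer (simp add: fa_mul_gen_indicator)

lemma fa_valid_eq_sum_words: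
  assumes "fa_valid x"
  shows "Abs_nc_series x = (\<Sum>w\<in>{w. x w \<noteq> 0}. scalar (x w) * nc_word w)"
proof -
  have "Rep_nc_series (\<Sum>w\<in>{w. x w \<noteq> 0}. scalar (x w) * nc_word w) = x"
  proof
    fix v
    have "Rep_nc_series (\<Sum>w\<in>{w. x w \<noteq> 0}. scalar (x w) * nc_word w) v
        = (\<Sum>w\<in>{w. x w \<noteq> 0}. if v = w then x w else 0)"
      by (auto simp: Rep_nc_series_sum Rep_nc_series_scalar_mult nc_word.rep_eq fa_smult_def
          intro!: sum.cong)
    also have "\<dots> = x v"
      using assms by (simp add: fa_valid_def)
    finally show "Rep_nc_series (\<Sum>w\<in>{w. x w \<noteq> 0}. scalar (x w) * nc_word w) v = x v" .
  qed
  then show ?thesis by (metis Rep_nc_series_inverse)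
qed

context
  fixes a b c \<nu> :: "'a::field"
  assumes char: "(2::'a) \<noteq> 0"
begin

lemma nc_word_reducible: "nc_word w \<in> A_reducible a b c \<nu>"
  by (induction w)
    (simp_all add: nc_word_Nil nc_word_Cons gen_mult_reducible[OF char]
      A_reducible_span[OF A_span_power[of 0, simplified]])

lemma fa_valid_reducible: "fa_valid x \<Longrightarrow> Abs_nc_series x \<in> A_reducible a b c \<nu>"
  unfolding fa_valid_eq_sum_words
  by (intro A_reducible_sum A_reducible_scalar_mult nc_word_reducible)

end

theorem lemma3p5:
  fixes a b c \<nu> :: "'a::field"
  assumes alg_closed: "\<And>p :: 'a poly. degree p \<ge> 1 \<Longrightarrow> \<exists>x. poly p x = 0"
    and char_ne_2: "(2::'a) \<noteq> 0"
    and x_valid: "fa_valid (x :: 'a fa)"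
  shows "\<exists>(n::nat) (coef::nat \<Rightarrow> 'a).
           fa_sub x (\<lambda>w. \<Sum>i<n. fa_smult (coef i) (fa_pow fA i) w) \<in> I_pre a b c \<nu>"
proof -
  obtain y where y: "y \<in> A_span" "Abs_nc_series x - y \<in> I_pre_nc a b c \<nu>"
    using fa_valid_reducible[OF char_ne_2 x_valid, where a=a and b=b and c=c and \<nu>=\<nu>] unfolding A_reducible_def by auto
  obtain n coef where "y = (\<Sum>i<n. scalar (coef i) * gA ^ i)"
    using A_span_eq_sum[OF y(1)] by auto
  then have "Rep_nc_series (Abs_nc_series x - y)
      = fa_sub x (\<lambda>w. \<Sum>i<n. fa_smult (coef i) (fa_pow fA i) w)"
    by (simp add: Rep_nc_series_diff Abs_nc_series_inverse Rep_nc_series_sum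
        Rep_nc_series_scalar_mult Rep_nc_series_power nc_gen.rep_eq fa_sub_def)
  then show ?thesis using y(2) unfolding I_pre_nc_def by auto
qed

end
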